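(* Let $p \ge 2$ be a fixed integer and let $\lambda = \lambda(n) \ge 0$. Let $\mathbf{x}_* \in \mathbb{R}^n$ be drawn from any prior supported on the sphere $\{\mathbf{x} \in \mathbb{R}^n : \|\mathbf{x}\| = \sqrt{n}\}$, and let $\mathbf{Y} = \lambda \mathbf{x}_*^{\otimes p} + \mathbf{G}$ (spiked tensor model). Suppose we are given $\mathbf{u} \in \mathbb{R}^n$ with $\mathrm{corr}(\mathbf{u},\mathbf{x}_* ) \ge \tau$, and set $\widehat{\mathbf{x}} = \mathbf{Y}\{\mathbf{u}\}$. Then there exists a constant $c = c(p) > 0$ such that with high probability \[\mathrm{corr}(\widehat{\mathbf{x}},\mathbf{x}_* ) \ge 1 - c\,\lambda^{-1}\tau^{1-p} n^{(1-p)/2}.\] In particular, if $\tau > 0$ is any constant and $\lambda = \omega(n^{(1-p)/2})$, then $\mathrm{corr}(\widehat{\mathbf{x}},\mathbf{x}_* ) = 1 - o(1)$ with high probability.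
   Context: The noise tensor $\mathbf{G} \in (\mathbb{R}^n)^{\otimes p}$ is $\mathbf{G} = \frac{1}{\sqrt{p!}}\sum_{\pi \in S_p} \widetilde{\mathbf{G}}^\pi$, where $\widetilde{\mathbf{G}}$ has i.i.d. $\mathcal{N}(0,1)$ entries, independent of $\mathbf{x}_*$, and $\widetilde{\mathbf{G}}^\pi_{i_1,\ldots,i_p} = \widetilde{\mathbf{G}}_{i_{\pi(1)},\ldots,i_{\pi(p)}}$. For $\mathbf{u} \in \mathbb{R}^n$, $\mathbf{Y}\{\mathbf{u}\} \in \mathbb{R}^n$ is the vector with $\mathbf{Y}\{\mathbf{u}\}_i = \sum_{j_1,\ldots,j_{p-1} \in [n]} \mathbf{Y}_{i,j_1,\ldots,j_{p-1}} \mathbf{u}_{j_1}\cdots \mathbf{u}_{j_{p-1}}$ (one step of the tensor power method). The normalized correlation is $\mathrm{corr}(\mathbf{a},\mathbf{b}) = |\langle \mathbf{a},\mathbf{b}\rangle|/(\|\mathbf{a}\|\|\mathbf{b}\|)$. "With high probability" means with probability $1-o(1)$ as $n \to \infty$ with $p$ fixed; asymptotic notation refers to $n\to\infty$. *)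

theory Defs
  imports "HOL-Probability.Probability" "HOL-Combinatorics.Permutations" "HOL-Library.Landau_Symbols"
begin

text \<open>Vectors in R^n are functions nat => real; only coordinates 0..n-1 matter.
  Order-p tensors are functions on index lists of length p with entries < n.\<close>

definition idx :: "nat \<Rightarrow> nat \<Rightarrow> nat list set" where
  "idx n p = {is. length is = p \<and> set is \<subseteq> {..<n}}"

definition vinner :: "nat \<Rightarrow> (nat \<Rightarrow> real) \<Rightarrow> (nat \<Rightarrow> real) \<Rightarrow> real" where
  "vinner n a b = (\<Sum>i<n. a i * b i)"

definition vnorm :: "nat \<Rightarrow> (nat \<Rightarrow> real) \<Rightarrow> real" where
  "vnorm n a = sqrt (vinner n a a)"

definition corr :: "nat \<Rightarrow> (nat \<Rightarrow> real) \<Rightarrow> (nat \<Rightarrow> real) \<Rightarrow> real" where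
  "corr n a b = \<bar>vinner n a b\<bar> / (vnorm n a * vnorm n b)"

definition std_gauss :: "real measure" where
  "std_gauss = density lborel std_normal_density"

definition gauss_tensor :: "nat \<Rightarrow> nat \<Rightarrow> (nat list \<Rightarrow> real) measure" where
  "gauss_tensor n p = PiM (idx n p) (\<lambda>_. std_gauss)"

definition perm_idx :: "(nat \<Rightarrow> nat) \<Rightarrow> nat list \<Rightarrow> nat list" where
  "perm_idx \<pi> is = map (\<lambda>k. is ! \<pi> k) [0..<length is]"

definition sym_noise :: "nat \<Rightarrow> (nat list \<Rightarrow> real) \<Rightarrow> nat list \<Rightarrow> real" where
  "sym_noise p Gt is = (1 / sqrt (fact p)) * (\<Sum>\<pi>\<in>{\<pi>. \<pi> permutes {..<p}}. Gt (perm_idx \<pi> is))"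

definition spiked_tensor :: "nat \<Rightarrow> real \<Rightarrow> (nat \<Rightarrow> real) \<Rightarrow> (nat list \<Rightarrow> real) \<Rightarrow> nat list \<Rightarrow> real" where
  "spiked_tensor p lam x Gt is = lam * prod_list (map x is) + sym_noise p Gt is"

definition tensor_apply :: "nat \<Rightarrow> nat \<Rightarrow> (nat list \<Rightarrow> real) \<Rightarrow> (nat \<Rightarrow> real) \<Rightarrow> nat \<Rightarrow> real" where
  "tensor_apply n p Y u i = (\<Sum>js\<in>idx n (p - 1). Y (i # js) * prod_list (map u js))"

definition vec_space :: "nat \<Rightarrow> (nat \<Rightarrow> real) measure" where
  "vec_space n = PiM {..<n} (\<lambda>_. lborel)"

definition sphere_prior :: "nat \<Rightarrow> (nat \<Rightarrow> real) measure \<Rightarrow> bool" where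
  "sphere_prior n \<mu> \<longleftrightarrow> prob_space \<mu> \<and> sets \<mu> = sets (vec_space n)
     \<and> (AE x in \<mu>. vnorm n x = sqrt (real n))"

definition model :: "nat \<Rightarrow> nat \<Rightarrow> (nat \<Rightarrow> real) measure \<Rightarrow> ((nat \<Rightarrow> real) \<times> (nat list \<Rightarrow> real)) measure" where
  "model n p \<mu> = \<mu> \<Otimes>\<^sub>M gauss_tensor n p"

text \<open>Event A n holds with high probability: it contains measurable events
  whose probability tends to 1 (inner probability -> 1).\<close>
definition whp :: "(nat \<Rightarrow> 'a measure) \<Rightarrow> (nat \<Rightarrow> 'a set) \<Rightarrow> bool" where
  "whp M A \<longleftrightarrow> (\<exists>E. (\<forall>n. E n \<in> sets (M n) \<and> E n \<subseteq> A n) \<and> (\<lambda>n. measure (M n) (E n)) \<longlonglongrightarrow> 1)"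

end

theory Submission
  imports Defs
begin

text \<open>
  Write \<open>Y{u} = \<lambda> <x, u>\<^sup>p\<^sup>-\<^sup>1 x + G{u}\<close>. With probability at least \<open>1 - 2 exp (- n)\<close> the
  injective norm of \<open>G\<close> is at most \<open>C(p) sqrt n\<close>: for fixed unit vectors \<open>w\<^sub>1, ..., w\<^sub>p\<close> the form
  \<open>G(w\<^sub>1, ..., w\<^sub>p)\<close> is a linear combination of the i.i.d. entries of \<open>G-tilde\<close>, a centred Gaussian of
  variance at most \<open>p!\<close>; a Chernoff bound and a union bound over the \<open>exp (2 p (p + 1) n)\<close> tuples
  from a \<open>1/(2p)\<close>-net of the unit ball control it on the net, and the usual net argument extends
  the bound, losing a factor 2, to the whole ball. On this event, which does not depend on \<open>u\<close>,
  \<open>|G{u}| \<le> 2 C sqrt n |u|\<^sup>p\<^sup>-\<^sup>1\<close> while the signal has norm at least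
  \<open>\<lambda> (\<tau> |u| sqrt n)\<^sup>p\<^sup>-\<^sup>1 sqrt n\<close>, and \<open>corr (a x + g, x) \<ge> 1 - 2 |g| / (|a| |x|)\<close>.
\<close>

lemma finite_idx [simp]: "finite (idx n p)"
  unfolding idx_def using finite_lists_length_eq[of "{..<n}" p] by (simp add: conj_commute)

lemma idx_length: "is \<in> idx n p \<Longrightarrow> length is = p"
  by (simp add: idx_def)

lemma idx_nth_less: "is \<in> idx n p \<Longrightarrow> k < p \<Longrightarrow> is ! k < n"
  using nth_mem by (fastforce simp: idx_def)

lemma idx_Suc: "idx n (Suc p) = (\<lambda>(i, js). i # js) ` ({..<n} \<times> idx n p)"
proof (rule set_eqI)
  show "xs \<in> idx n (Suc p) \<longleftrightarrow> xs \<in> (\<lambda>(i, js). i # js) ` ({..<n} \<times> idx n p)" for xs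
    by (cases xs) (auto simp: idx_def)
qed

lemma sum_idx_Suc: "(\<Sum>is\<in>idx n (Suc p). f is) = (\<Sum>i<n. \<Sum>js\<in>idx n p. f (i # js))"
proof -
  have "inj_on (\<lambda>(i, js). i # js) ({..<n} \<times> idx n p)"
    by (auto simp: inj_on_def)
  then have "(\<Sum>is\<in>idx n (Suc p). f is) = (\<Sum>(i, js)\<in>{..<n} \<times> idx n p. f (i # js))"
    unfolding idx_Suc by (simp add: sum.reindex split_def)
  then show ?thesis
    by (simp add: sum.cartesian_product)
qed

lemma sum_idx_prod_nth:
  "(\<Sum>is\<in>idx n p. \<Prod>k<p. f k (is ! k)) = (\<Prod>k<p. \<Sum>i<n. (f k i :: real))"
proof (induction p arbitrary: f)
  case 0
  have "idx n 0 = {[]}"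
    by (auto simp: idx_def)
  then show ?case
    by simp
next
  case (Suc p)
  have "(\<Sum>is\<in>idx n (Suc p). \<Prod>k<Suc p. f k (is ! k))
      = (\<Sum>i<n. f 0 i * (\<Sum>js\<in>idx n p. \<Prod>k<p. f (Suc k) (js ! k)))"
    by (simp add: sum_idx_Suc prod.lessThan_Suc_shift sum_distrib_left del: prod.lessThan_Suc)
  also have "\<dots> = (\<Prod>k<Suc p. \<Sum>i<n. f k i)"
    using Suc[of "\<lambda>k. f (Suc k)"]
    by (simp add: sum_distrib_right prod.lessThan_Suc_shift del: prod.lessThan_Suc)
  finally show ?case .
qed

lemma prod_list_map_conv_prod_nth: "prod_list (map u js) = (\<Prod>k<length js. (u (js ! k) :: real))"
  by (induction js) (auto simp: prod.lessThan_Suc_shift simp del: prod.lessThan_Suc)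

lemma sum_idx_prod_list:
  "(\<Sum>js\<in>idx n q. prod_list (map x js) * prod_list (map u js)) = vinner n x u ^ q"
proof -
  have "(\<Sum>js\<in>idx n q. prod_list (map x js) * prod_list (map u js))
      = (\<Sum>js\<in>idx n q. \<Prod>k<q. x (js ! k) * u (js ! k))"
    by (intro sum.cong refl) (simp add: prod_list_map_conv_prod_nth idx_length prod.distrib)
  then show ?thesis
    using sum_idx_prod_nth[where f = "\<lambda>_ i. x i * u i"] by (simp add: vinner_def)
qed

lemma length_perm_idx [simp]: "length (perm_idx \<pi> is) = length is"
  by (simp add: perm_idx_def)

lemma nth_perm_idx [simp]: "k < length is \<Longrightarrow> perm_idx \<pi> is ! k = is ! \<pi> k"
  by (simp add: perm_idx_def)

lemma perm_idx_in_idx: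
  assumes "\<pi> permutes {..<p}" "is \<in> idx n p"
  shows "perm_idx \<pi> is \<in> idx n p"
proof -
  have "\<pi> k < p" if "k < p" for k
    using permutes_in_image[OF assms(1)] that by simp
  then show ?thesis
    using assms(2) idx_nth_less[OF assms(2)] by (auto simp: idx_def in_set_conv_nth)
qed

lemma perm_idx_inv_perm_idx:
  assumes "\<pi> permutes {..<p}" "length is = p"
  shows "perm_idx (inv \<pi>) (perm_idx \<pi> is) = is"
proof (rule nth_equalityI)
  fix k assume "k < length (perm_idx (inv \<pi>) (perm_idx \<pi> is))"
  moreover have "k < p \<Longrightarrow> inv \<pi> k < p"
    using permutes_in_image[OF permutes_inv[OF assms(1)]] by simp
  ultimately show "perm_idx (inv \<pi>) (perm_idx \<pi> is) ! k = is ! k"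
    using assms by (simp add: permutes_inverses(1))
qed simp

lemma sum_idx_reindex_perm_idx:
  assumes \<pi>: "\<pi> permutes {..<p}"
  shows "(\<Sum>is\<in>idx n p. g (perm_idx \<pi> is)) = (\<Sum>is\<in>idx n p. (g is :: real))"
proof -
  have inv: "inv \<pi> permutes {..<p}"
    using \<pi> by (rule permutes_inv)
  have "perm_idx (inv \<pi>) (perm_idx \<pi> a) = a" "perm_idx \<pi> a \<in> idx n p" if "a \<in> idx n p" for a
    using that perm_idx_inv_perm_idx[OF \<pi>] perm_idx_in_idx[OF \<pi>] by (auto simp: idx_def)
  moreover have "perm_idx \<pi> (perm_idx (inv \<pi>) b) = b" "perm_idx (inv \<pi>) b \<in> idx n p"
    if "b \<in> idx n p" for b
    using that perm_idx_inv_perm_idx[OF inv] perm_idx_in_idx[OF inv] permutes_inv_inv[OF \<pi>]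
    by (auto simp: idx_def)
  ultimately show ?thesis
    by (intro sum.reindex_bij_witness[where i = "perm_idx (inv \<pi>)" and j = "perm_idx \<pi>"]) auto
qed

lemma vnorm_L2: "vnorm n a = L2_set a {..<n}"
  by (simp add: vnorm_def vinner_def L2_set_def power2_eq_square)

lemma vnorm_nonneg [simp]: "vnorm n a \<ge> 0"
  by (simp add: vnorm_L2)

lemma vnorm_sq: "vnorm n a ^ 2 = vinner n a a"
  by (simp add: vnorm_def vinner_def sum_nonneg)

lemma sum_sq_eq_vnorm_sq: "(\<Sum>i<n. a i ^ 2) = vnorm n a ^ 2"
  using vnorm_sq[of n a] by (simp add: vinner_def power2_eq_square)

lemma abs_le_vnorm: "i < n \<Longrightarrow> \<bar>a i\<bar> \<le> vnorm n a"
  using member_le_L2_set[of "{..<n}" i "\<lambda>i. \<bar>a i\<bar>"] by (simp add: vnorm_L2 L2_set_def)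

lemma vnorm_scale: "vnorm n (\<lambda>i. c * a i) = \<bar>c\<bar> * vnorm n a"
  by (simp add: vnorm_L2 L2_set_def power_mult_distrib real_sqrt_mult
      flip: sum_distrib_left)

lemma vnorm_eq_0_iff: "vnorm n a = 0 \<longleftrightarrow> (\<forall>i<n. a i = 0)"
  by (auto simp: vnorm_L2 L2_set_eq_0_iff)

lemma vnorm_cong: "(\<And>i. i < n \<Longrightarrow> a i = b i) \<Longrightarrow> vnorm n a = vnorm n b"
  unfolding vnorm_def vinner_def by (intro arg_cong[where f = sqrt] sum.cong) auto

lemma vnorm_add_le: "vnorm n (\<lambda>i. a i + b i) \<le> vnorm n a + vnorm n b"
  by (simp add: vnorm_L2 L2_set_triangle_ineq)

lemma vnorm_mono: "(\<And>i. i < n \<Longrightarrow> \<bar>a i\<bar> \<le> \<bar>b i\<bar>) \<Longrightarrow> vnorm n a \<le> vnorm n b"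
  unfolding vnorm_def vinner_def
  by (intro real_sqrt_le_mono sum_mono) (metis abs_mult_self_eq abs_ge_zero lessThan_iff mult_mono)

lemma vnorm_const: "vnorm n (\<lambda>_. c) = sqrt (real n) * \<bar>c\<bar>"
  by (simp add: vnorm_def vinner_def real_sqrt_mult)

lemma abs_vinner_le: "\<bar>vinner n a b\<bar> \<le> vnorm n a * vnorm n b"
proof -
  have "\<bar>vinner n a b\<bar> \<le> (\<Sum>i<n. \<bar>a i\<bar> * \<bar>b i\<bar>)"
    unfolding vinner_def by (rule order_trans[OF sum_abs]) (simp add: abs_mult)
  then show ?thesis
    by (simp add: vnorm_L2 order_trans[OF _ L2_set_mult_ineq])
qed

lemma vinner_commute: "vinner n a b = vinner n b a"
  by (simp add: vinner_def mult.commute)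

lemma sum_abs_le_vnorm: "(\<Sum>i<n. \<bar>a i\<bar>) \<le> sqrt (real n) * vnorm n a"
  using L2_set_mult_ineq[of a "\<lambda>_. 1" "{..<n}"]
  by (simp add: vnorm_L2 L2_set_constant mult.commute)

section \<open>Multilinear forms of tensors\<close>

definition tensor_form :: "nat \<Rightarrow> nat \<Rightarrow> (nat list \<Rightarrow> real) \<Rightarrow> (nat \<Rightarrow> nat \<Rightarrow> real) \<Rightarrow> real" where
  "tensor_form n p A ws = (\<Sum>is\<in>idx n p. A is * (\<Prod>k<p. ws k (is ! k)))"

lemma tensor_form_cong:
  "(\<And>k. k < p \<Longrightarrow> ws k = ws' k) \<Longrightarrow> tensor_form n p A ws = tensor_form n p A ws'"
  unfolding tensor_form_def by (intro sum.cong refl arg_cong2[where f = "(*)"] prod.cong) auto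

lemma tensor_form_upd_diff:
  assumes "j < p"
  shows "tensor_form n p A (ws(j := a)) - tensor_form n p A (ws(j := b))
       = tensor_form n p A (ws(j := (\<lambda>i. a i - b i)))"
proof -
  have upd: "(\<Prod>k<p. (ws(j := c)) k (is ! k)) = c (is ! j) * (\<Prod>k\<in>{..<p} - {j}. ws k (is ! k))"
    for c "is"
    using assms by (subst prod.remove[of _ j]) (auto intro!: prod.cong)
  show ?thesis
    unfolding tensor_form_def upd by (simp add: algebra_simps flip: sum_subtractf)
qed

lemma tensor_form_scale:
  "tensor_form n p A (\<lambda>k i. c k * ws k i) = (\<Prod>k<p. c k) * tensor_form n p A ws"
  unfolding tensor_form_def sum_distrib_left by (simp add: prod.distrib mult_ac)

lemma tensor_form_eq_0:
  assumes "k < p" "\<forall>i<n. ws k i = 0"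
  shows "tensor_form n p A ws = 0"
  unfolding tensor_form_def
proof (intro sum.neutral ballI)
  fix "is" assume "is \<in> idx n p"
  then have "ws k (is ! k) = 0"
    using assms idx_nth_less by blast
  then have "(\<Prod>k<p. ws k (is ! k)) = 0"
    using assms(1) by (intro prod_zero) auto
  then show "A is * (\<Prod>k<p. ws k (is ! k)) = 0"
    by simp
qed

lemma abs_tensor_form_le_sum_abs:
  assumes "\<forall>k<p. vnorm n (ws k) \<le> 1"
  shows "\<bar>tensor_form n p A ws\<bar> \<le> (\<Sum>is\<in>idx n p. \<bar>A is\<bar>)"
  unfolding tensor_form_def
proof (rule order_trans[OF sum_abs sum_mono])
  fix "is" assume "is": "is \<in> idx n p"
  have "\<bar>\<Prod>k<p. ws k (is ! k)\<bar> \<le> 1"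
    unfolding abs_prod
    using assms abs_le_vnorm[OF idx_nth_less[OF "is"]] by (intro prod_le_1) (auto intro: order_trans)
  then show "\<bar>A is * (\<Prod>k<p. ws k (is ! k))\<bar> \<le> \<bar>A is\<bar>"
    by (simp add: abs_mult mult_left_le)
qed

lemma tensor_form_bound_homogeneous:
  assumes B: "\<And>ws. \<forall>k<p. vnorm n (ws k) \<le> 1 \<Longrightarrow> \<bar>tensor_form n p A ws\<bar> \<le> B"
  shows "\<bar>tensor_form n p A ws\<bar> \<le> B * (\<Prod>k<p. vnorm n (ws k))"
proof (cases "\<exists>k<p. vnorm n (ws k) = 0")
  case True
  then obtain k where k: "k < p" "vnorm n (ws k) = 0"
    by blast
  then have "(\<Prod>k<p. vnorm n (ws k)) = 0"
    by (intro prod_zero) auto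
  moreover have "tensor_form n p A ws = 0"
    using k by (intro tensor_form_eq_0[of k]) (auto simp: vnorm_eq_0_iff)
  ultimately show ?thesis
    by (metis abs_zero mult_zero_right order_refl)
next
  case False
  define c where "c k = vnorm n (ws k)" for k
  have c: "c k > 0" if "k < p" for k
    using False that unfolding c_def by (metis vnorm_nonneg less_le)
  define ws' where "ws' k = (\<lambda>i. (1 / c k) * ws k i)" for k
  have "vnorm n (ws' k) = 1" if "k < p" for k
    unfolding ws'_def vnorm_scale using c[OF that] by (simp add: c_def)
  then have "\<forall>k<p. vnorm n (ws' k) \<le> 1"
    by simp
  then have "\<bar>tensor_form n p A ws'\<bar> \<le> B"
    by (rule B)
  moreover have "tensor_form n p A ws = (\<Prod>k<p. c k) * tensor_form n p A ws'"
  proof -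
    have "tensor_form n p A ws = tensor_form n p A (\<lambda>k i. c k * ws' k i)"
      using c by (intro tensor_form_cong) (force simp: ws'_def fun_eq_iff)
    then show ?thesis
      by (simp add: tensor_form_scale)
  qed
  moreover have "(\<Prod>k<p. c k) > 0"
    using c by (intro prod_pos) auto
  ultimately show ?thesis
    by (simp add: abs_mult c_def mult.commute mult_left_mono)
qed

lemma abs_tensor_form_upd_le:
  assumes M: "\<And>ws. \<forall>k<p. vnorm n (ws k) \<le> 1 \<Longrightarrow> \<bar>tensor_form n p A ws\<bar> \<le> M"
    and j: "j < p" and ws: "\<forall>k<p. vnorm n (ws k) \<le> 1" and e: "vnorm n e \<le> \<epsilon>"
  shows "\<bar>tensor_form n p A (ws(j := e))\<bar> \<le> \<epsilon> * M"
proof -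
  have "M \<ge> 0"
    using M[OF ws] by linarith
  moreover have "(\<Prod>k<p. vnorm n ((ws(j := e)) k)) \<le> (\<Prod>k<p. if k = j then \<epsilon> else 1)"
    using ws e by (intro prod_mono) auto
  moreover have "(\<Prod>k<p. if k = j then \<epsilon> else 1) = \<epsilon>"
    using j by (simp add: prod.delta)
  ultimately have "M * (\<Prod>k<p. vnorm n ((ws(j := e)) k)) \<le> \<epsilon> * M"
    by (simp add: mult.commute mult_left_mono)
  moreover have "\<bar>tensor_form n p A (ws(j := e))\<bar> \<le> M * (\<Prod>k<p. vnorm n ((ws(j := e)) k))"
    by (rule tensor_form_bound_homogeneous[OF M])
  ultimately show ?thesis
    by linarith
qed

lemma tensor_form_diff_le:
  assumes M: "\<And>ws. \<forall>k<p. vnorm n (ws k) \<le> 1 \<Longrightarrow> \<bar>tensor_form n p A ws\<bar> \<le> M"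
    and ws: "\<forall>k<p. vnorm n (ws k) \<le> 1" and ws': "\<forall>k<p. vnorm n (ws' k) \<le> 1"
    and close: "\<forall>k<p. vnorm n (\<lambda>i. ws k i - ws' k i) \<le> \<epsilon>"
  shows "\<bar>tensor_form n p A ws - tensor_form n p A ws'\<bar> \<le> real p * \<epsilon> * M"
proof -
  \<comment> \<open>Hybrid argument: replace \<open>ws\<close> by \<open>ws'\<close> one slot at a time.\<close>
  define h where "h j k = (if k < j then ws' k else ws k)" for j k
  have step: "\<bar>tensor_form n p A (h j) - tensor_form n p A (h (Suc j))\<bar> \<le> \<epsilon> * M"
    if j: "j < p" for j
  proof -
    have "h j = (h j)(j := ws j)" "h (Suc j) = (h j)(j := ws' j)"
      by (auto simp: h_def)
    then have "tensor_form n p A (h j) - tensor_form n p A (h (Suc j))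
        = tensor_form n p A ((h j)(j := (\<lambda>i. ws j i - ws' j i)))"
      by (metis tensor_form_upd_diff[OF j])
    moreover have "\<forall>k<p. vnorm n (h j k) \<le> 1"
      using ws ws' by (simp add: h_def)
    ultimately show ?thesis
      using abs_tensor_form_upd_le[OF M j] close j by simp
  qed
  have "h 0 = ws" "tensor_form n p A (h p) = tensor_form n p A ws'"
    by (auto simp: h_def intro: tensor_form_cong)
  then have "tensor_form n p A ws - tensor_form n p A ws'
      = (\<Sum>j<p. tensor_form n p A (h j) - tensor_form n p A (h (Suc j)))"
    using sum_lessThan_telescope'[of "\<lambda>j. tensor_form n p A (h j)" p] by simp
  also have "\<bar>\<dots>\<bar> \<le> (\<Sum>j<p. \<epsilon> * M)"
    by (rule order_trans[OF sum_abs sum_mono]) (simp add: step)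
  finally show ?thesis
    by simp
qed

text \<open>The supremum \<open>M\<close> over the unit ball satisfies \<open>M \<le> t + p \<epsilon> M\<close>, hence \<open>M \<le> 2 t\<close>.\<close>

lemma tensor_form_net_bound:
  assumes eps: "real p * \<epsilon> \<le> 1 / 2"
    and net: "\<And>v. vnorm n v \<le> 1 \<Longrightarrow> \<exists>w\<in>N. vnorm n (\<lambda>i. v i - w i) \<le> \<epsilon>"
    and net_unit: "\<And>w. w \<in> N \<Longrightarrow> vnorm n w \<le> 1"
    and bound: "\<And>ws. \<forall>k<p. ws k \<in> N \<Longrightarrow> \<bar>tensor_form n p A ws\<bar> \<le> t"
    and ws: "\<forall>k<p. vnorm n (ws k) \<le> 1"
  shows "\<bar>tensor_form n p A ws\<bar> \<le> 2 * t"
proof -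
  define S where "S = {\<bar>tensor_form n p A ws\<bar> | ws. \<forall>k<p. vnorm n (ws k) \<le> 1}"
  define M where "M = Sup S"
  have "bdd_above S"
    unfolding S_def by (rule bdd_aboveI[where M = "\<Sum>is\<in>idx n p. \<bar>A is\<bar>"])
      (auto intro: abs_tensor_form_le_sum_abs)
  then have upper: "\<And>ws. \<forall>k<p. vnorm n (ws k) \<le> 1 \<Longrightarrow> \<bar>tensor_form n p A ws\<bar> \<le> M"
    unfolding M_def by (intro cSup_upper) (auto simp: S_def)
  have M0: "M \<ge> 0"
    using upper[OF ws] by linarith
  have "\<bar>tensor_form n p A vs\<bar> \<le> t + M / 2" if vs: "\<forall>k<p. vnorm n (vs k) \<le> 1" for vs
  proof -
    have "\<forall>k. \<exists>w. k < p \<longrightarrow> w \<in> N \<and> vnorm n (\<lambda>i. vs k i - w i) \<le> \<epsilon>"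
      using net vs by blast
    then obtain ws' where ws': "\<forall>k<p. ws' k \<in> N \<and> vnorm n (\<lambda>i. vs k i - ws' k i) \<le> \<epsilon>"
      by (metis choice)
    have "\<bar>tensor_form n p A vs - tensor_form n p A ws'\<bar> \<le> real p * \<epsilon> * M"
      using ws' net_unit vs by (intro tensor_form_diff_le[OF upper]) auto
    also have "\<dots> \<le> M / 2"
      using mult_right_mono[OF eps M0] by simp
    finally have "\<bar>tensor_form n p A vs - tensor_form n p A ws'\<bar> \<le> M / 2" .
    moreover have "\<bar>tensor_form n p A ws'\<bar> \<le> t"
      using bound ws' by blast
    ultimately show ?thesis
      by linarith
  qed
  then have "M \<le> t + M / 2"
    unfolding M_def using ws by (intro cSup_least) (auto simp: S_def)
  then show ?thesis
    using upper[OF ws] by linarith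
qed

lemma inner_tensor_apply:
  assumes "p \<ge> 1"
  shows "vinner n v (tensor_apply n p A u) = tensor_form n p A (\<lambda>k. if k = 0 then v else u)"
proof -
  obtain q where p: "p = Suc q"
    using assms by (cases p) auto
  have "tensor_form n p A (\<lambda>k. if k = 0 then v else u)
      = (\<Sum>i<n. \<Sum>js\<in>idx n q. v i * (A (i # js) * prod_list (map u js)))"
    unfolding tensor_form_def p sum_idx_Suc
    by (intro sum.cong refl)
      (simp add: prod.lessThan_Suc_shift prod_list_map_conv_prod_nth idx_length del: prod.lessThan_Suc)
  then show ?thesis
    by (simp add: vinner_def tensor_apply_def p sum_distrib_left)
qed

lemma vnorm_tensor_apply_le:
  assumes p: "p \<ge> 1"
    and B: "\<And>ws. \<forall>k<p. vnorm n (ws k) \<le> 1 \<Longrightarrow> \<bar>tensor_form n p A ws\<bar> \<le> B"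
  shows "vnorm n (tensor_apply n p A u) \<le> B * vnorm n u ^ (p - 1)"
proof -
  define g where "g = tensor_apply n p A u"
  have "B \<ge> 0"
    using B[of "\<lambda>_ _. 0"] by (simp add: vnorm_const order_trans[OF abs_ge_zero])
  have "vnorm n g ^ 2 = tensor_form n p A (\<lambda>k. if k = 0 then g else u)"
    unfolding vnorm_sq g_def by (rule inner_tensor_apply[OF p])
  also have "\<dots> \<le> B * (\<Prod>k<p. vnorm n (if k = 0 then g else u))"
    by (rule order_trans[OF abs_ge_self tensor_form_bound_homogeneous[OF B]])
  also have "(\<Prod>k<p. vnorm n (if k = 0 then g else u)) = vnorm n g * vnorm n u ^ (p - 1)"
    using p by (cases p) (simp_all add: prod.lessThan_Suc_shift del: prod.lessThan_Suc)
  finally have "vnorm n g * vnorm n g \<le> vnorm n g * (B * vnorm n u ^ (p - 1))"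
    by (simp add: power2_eq_square mult_ac)
  then have "vnorm n g \<le> B * vnorm n u ^ (p - 1)"
    using \<open>B \<ge> 0\<close> vnorm_nonneg[of n g]
    by (cases "vnorm n g = 0") (simp_all add: mult_le_cancel_left_pos)
  then show ?thesis
    by (simp add: g_def)
qed

section \<open>A net of the unit ball of exponential size\<close>

definition int_toward_0 :: "real \<Rightarrow> int" where
  "int_toward_0 y = (if y \<ge> 0 then \<lfloor>y\<rfloor> else - \<lfloor>- y\<rfloor>)"

lemma abs_int_toward_0_le: "\<bar>real_of_int (int_toward_0 y)\<bar> \<le> \<bar>y\<bar>"
  using floor_correct[of y] floor_correct[of "- y"] unfolding int_toward_0_def
  by (cases "y \<ge> 0") auto

lemma abs_diff_int_toward_0_le: "\<bar>y - real_of_int (int_toward_0 y)\<bar> \<le> 1"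
  using floor_correct[of y] floor_correct[of "- y"] unfolding int_toward_0_def
  by (cases "y \<ge> 0") (simp_all add: abs_le_iff, linarith+)

lemma int_toward_0_scaled:
  assumes "s > 0"
  shows "\<bar>real_of_int (int_toward_0 (y * s)) / s\<bar> \<le> \<bar>y\<bar>"
    and "\<bar>y - real_of_int (int_toward_0 (y * s)) / s\<bar> \<le> 1 / s"
proof -
  show "\<bar>real_of_int (int_toward_0 (y * s)) / s\<bar> \<le> \<bar>y\<bar>"
    using abs_int_toward_0_le[of "y * s"] assms by (simp add: abs_mult divide_le_eq)
  have "y - real_of_int (int_toward_0 (y * s)) / s = (y * s - real_of_int (int_toward_0 (y * s))) / s"
    using assms by (simp add: field_simps)
  then show "\<bar>y - real_of_int (int_toward_0 (y * s)) / s\<bar> \<le> 1 / s"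
    using abs_diff_int_toward_0_le[of "y * s"] assms by (simp add: divide_right_mono)
qed

definition l1_lattice_ball :: "nat \<Rightarrow> nat \<Rightarrow> (nat \<Rightarrow> int) set" where
  "l1_lattice_ball n m = {k \<in> {..<n} \<rightarrow>\<^sub>E {- int m..int m}. (\<Sum>i<n. \<bar>k i\<bar>) \<le> int m}"

lemma finite_l1_lattice_ball: "finite (l1_lattice_ball n m)"
proof -
  have "l1_lattice_ball n m \<subseteq> {..<n} \<rightarrow>\<^sub>E {- int m..int m}"
    unfolding l1_lattice_ball_def by blast
  then show ?thesis
    by (rule finite_subset) (simp add: finite_PiE)
qed

lemma sum_half_pow_abs: "(\<Sum>j\<in>{- int m..int m}. (1 / 2 :: real) ^ nat \<bar>j\<bar>) = 3 - 2 * (1 / 2) ^ m"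
proof (induction m)
  case (Suc m)
  have "{- int (Suc m)..int (Suc m)} = insert (- int (Suc m)) (insert (int (Suc m)) {- int m..int m})"
    by auto
  then have "(\<Sum>j\<in>{- int (Suc m)..int (Suc m)}. (1 / 2 :: real) ^ nat \<bar>j\<bar>)
      = 2 * (1 / 2) ^ Suc m + (\<Sum>j\<in>{- int m..int m}. (1 / 2) ^ nat \<bar>j\<bar>)"
    by (simp add: nat_add_distrib)
  then show ?case
    using Suc by simp
qed simp

lemma l1_lattice_ball_weight_ge_1:
  assumes "k \<in> l1_lattice_ball n m"
  shows "1 \<le> 2 ^ m * (\<Prod>i<n. (1 / 2 :: real) ^ nat \<bar>k i\<bar>)"
proof -
  have "int (\<Sum>i<n. nat \<bar>k i\<bar>) = (\<Sum>i<n. \<bar>k i\<bar>)"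
    by (simp add: of_nat_sum)
  also have "\<dots> \<le> int m"
    using assms unfolding l1_lattice_ball_def by blast
  finally have "(\<Sum>i<n. nat \<bar>k i\<bar>) \<le> m"
    by (simp only: of_nat_le_iff)
  then have "(1 / 2 :: real) ^ m \<le> (1 / 2) ^ (\<Sum>i<n. nat \<bar>k i\<bar>)"
    by (intro power_decreasing) auto
  also have "\<dots> = (\<Prod>i<n. (1 / 2) ^ nat \<bar>k i\<bar>)"
    by (simp add: power_sum)
  finally have "(2 :: real) ^ m * (1 / 2) ^ m \<le> 2 ^ m * (\<Prod>i<n. (1 / 2) ^ nat \<bar>k i\<bar>)"
    by simp
  then show ?thesis
    by (simp add: power_one_over)
qed

text \<open>Count with the weight \<open>2 ^ m * (\<Prod>i<n. (1 / 2) ^ \<bar>k i\<bar>)\<close>, which is at least 1 on the ball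
  and factorizes over the coordinates.\<close>

lemma card_l1_lattice_ball: "real (card (l1_lattice_ball n m)) \<le> 2 ^ m * 3 ^ n"
proof -
  let ?w = "\<lambda>k. 2 ^ m * (\<Prod>i<n. (1 / 2 :: real) ^ nat \<bar>k i\<bar>)"
  have "real (card (l1_lattice_ball n m)) = (\<Sum>k\<in>l1_lattice_ball n m. 1)"
    by simp
  also have "\<dots> \<le> (\<Sum>k\<in>l1_lattice_ball n m. ?w k)"
    by (rule sum_mono) (rule l1_lattice_ball_weight_ge_1)
  also have "\<dots> \<le> (\<Sum>k\<in>{..<n} \<rightarrow>\<^sub>E {- int m..int m}. ?w k)"
  proof (rule sum_mono2)
    show "finite ({..<n} \<rightarrow>\<^sub>E {- int m..int m})"
      by (rule finite_PiE) auto
    show "l1_lattice_ball n m \<subseteq> {..<n} \<rightarrow>\<^sub>E {- int m..int m}"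
      unfolding l1_lattice_ball_def by blast
    show "0 \<le> ?w k" for k
      by (intro mult_nonneg_nonneg prod_nonneg) auto
  qed
  also have "\<dots> = 2 ^ m * (\<Prod>i<n. \<Sum>j\<in>{- int m..int m}. (1 / 2 :: real) ^ nat \<bar>j\<bar>)"
    by (subst prod_sum_PiE) (auto simp: sum_distrib_left)
  also have "\<dots> \<le> 2 ^ m * (\<Prod>i<n. 3)"
    unfolding sum_half_pow_abs using power_le_one[of "1 / 2 :: real" m]
    by (intro mult_left_mono prod_mono) auto
  finally show ?thesis
    by simp
qed

text \<open>The \<open>l\<^sub>1\<close> constraint keeps its size
  \<open>exp (O (N * n))\<close> rather than \<open>n ^ O (n)\<close>.\<close>

definition unit_net :: "nat \<Rightarrow> nat \<Rightarrow> (nat \<Rightarrow> real) set" where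
  "unit_net n N = {w \<in> (\<lambda>k i. of_int (k i) / (N * sqrt n)) ` l1_lattice_ball n (N * n). vnorm n w \<le> 1}"

lemma finite_unit_net: "finite (unit_net n N)"
  unfolding unit_net_def by (rule finite_subset[OF _ finite_imageI[OF finite_l1_lattice_ball]]) blast

lemma vnorm_le_1_if_unit_net: "w \<in> unit_net n N \<Longrightarrow> vnorm n w \<le> 1"
  by (simp add: unit_net_def)

lemma int_toward_0_in_l1_lattice_ball:
  assumes n: "n \<ge> 1" and N: "N \<ge> 1" and v: "vnorm n v \<le> 1"
  shows "restrict (\<lambda>i. int_toward_0 (v i * (N * sqrt n))) {..<n} \<in> l1_lattice_ball n (N * n)"
proof -
  define s where "s = N * sqrt n"
  define k where "k = restrict (\<lambda>i. int_toward_0 (v i * s)) {..<n}"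
  have s: "s > 0"
    using n N by (simp add: s_def)
  have "\<bar>real_of_int (k i)\<bar> \<le> \<bar>v i\<bar> * s" if "i < n" for i
    using abs_int_toward_0_le[of "v i * s"] that s by (simp add: k_def abs_mult)
  then have "(\<Sum>i<n. \<bar>real_of_int (k i)\<bar>) \<le> (\<Sum>i<n. \<bar>v i\<bar>) * s"
    unfolding sum_distrib_right by (intro sum_mono) simp
  also have "\<dots> \<le> sqrt n * s"
    using sum_abs_le_vnorm[of v n] mult_left_mono[OF v, of "sqrt n"] s
    by (intro mult_right_mono) simp_all
  also have "\<dots> = real (N * n)"
    using n by (simp add: s_def)
  finally have "real_of_int (\<Sum>i<n. \<bar>k i\<bar>) \<le> real_of_int (int (N * n))"
    by simp
  then have l1: "(\<Sum>i<n. \<bar>k i\<bar>) \<le> int (N * n)"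
    by (simp only: of_int_le_iff)
  have "\<bar>k i\<bar> \<le> int (N * n)" if "i < n" for i
    using l1 member_le_sum[of i "{..<n}" "\<lambda>i. \<bar>k i\<bar>"] that by simp
  then have "k \<in> l1_lattice_ball n (N * n)"
    using l1 by (force simp: l1_lattice_ball_def PiE_iff k_def abs_le_iff)
  then show ?thesis
    by (simp add: k_def s_def)
qed

lemma unit_net_approx:
  assumes n: "n \<ge> 1" and N: "N \<ge> 1" and v: "vnorm n v \<le> 1"
  shows "\<exists>w\<in>unit_net n N. vnorm n (\<lambda>i. v i - w i) \<le> 1 / N"
proof -
  define s where "s = N * sqrt n"
  have s: "s > 0"
    using n N by (simp add: s_def)
  define k where "k = restrict (\<lambda>i. int_toward_0 (v i * s)) {..<n}"
  define w where "w = (\<lambda>i. real_of_int (k i) / s)"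
  have w_le: "\<bar>w i\<bar> \<le> \<bar>v i\<bar>" and v_w: "\<bar>v i - w i\<bar> \<le> 1 / s" if "i < n" for i
    using that int_toward_0_scaled[OF s, of "v i"] by (simp_all add: w_def k_def)
  have "vnorm n w \<le> 1"
    using v w_le by (auto intro: order_trans[OF vnorm_mono])
  then have "w \<in> unit_net n N"
    using int_toward_0_in_l1_lattice_ball[OF n N v] unfolding unit_net_def w_def k_def s_def by blast
  moreover have "vnorm n (\<lambda>i. v i - w i) \<le> vnorm n (\<lambda>_. 1 / s)"
    using v_w s by (intro vnorm_mono) auto
  moreover have "vnorm n (\<lambda>_. 1 / s) = 1 / N"
    using n s by (simp add: vnorm_const s_def)
  ultimately show ?thesis
    by auto
qed

lemma card_unit_net: "real (card (unit_net n N)) \<le> exp (real ((N + 2) * n))"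
proof -
  have "card (unit_net n N) \<le> card (l1_lattice_ball n (N * n))"
    unfolding unit_net_def
    by (rule order_trans[OF card_mono card_image_le])
       (auto intro: finite_imageI finite_l1_lattice_ball)
  then have "real (card (unit_net n N)) \<le> 2 ^ (N * n) * 3 ^ n"
    using card_l1_lattice_ball[of n "N * n"] by linarith
  also have "\<dots> \<le> exp 1 ^ (N * n) * exp 2 ^ n"
  proof (intro mult_mono power_mono)
    show "(2 :: real) \<le> exp 1" "(3 :: real) \<le> exp 2"
      using exp_ge_add_one_self[of 1] exp_ge_add_one_self[of 2] by simp_all
  qed simp_all
  also have "\<dots> = exp (real (N * n) * 1 + real n * 2)"
    by (simp only: exp_of_nat_mult exp_add)
  also have "\<dots> = exp (real ((N + 2) * n))"
    by (simp add: algebra_simps)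
  finally show ?thesis .
qed

section \<open>Gaussian linear forms\<close>

lemma prob_space_std_gauss: "prob_space std_gauss"
  unfolding std_gauss_def by (rule prob_space_normal_density) simp

lemma sets_std_gauss [measurable_cong]: "sets std_gauss = sets borel"
  by (simp add: std_gauss_def)

lemma std_gauss_mgf: "(\<integral>\<^sup>+x. ennreal (exp (a * x)) \<partial>std_gauss) = ennreal (exp (a\<^sup>2 / 2))"
proof -
  \<comment> \<open>Completing the square shifts the density to \<open>N(a, 1)\<close>.\<close>
  have shift: "std_normal_density x * exp (a * x) = exp (a\<^sup>2 / 2) * normal_density a 1 x" for x
  proof -
    have "- x\<^sup>2 / 2 + a * x = a\<^sup>2 / 2 + - (x - a)\<^sup>2 / 2"
      by (simp add: power2_eq_square field_simps)
    then show ?thesis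
      unfolding std_normal_density_def normal_density_def by (simp flip: exp_add)
  qed
  have "(\<integral>\<^sup>+x. ennreal (exp (a * x)) \<partial>std_gauss)
      = (\<integral>\<^sup>+x. ennreal (std_normal_density x) * ennreal (exp (a * x)) \<partial>lborel)"
    unfolding std_gauss_def by (rule nn_integral_density) auto
  also have "\<dots> = (\<integral>\<^sup>+x. ennreal (exp (a\<^sup>2 / 2)) * ennreal (normal_density a 1 x) \<partial>lborel)"
    by (intro nn_integral_cong) (simp add: shift flip: ennreal_mult)
  also have "\<dots> = ennreal (exp (a\<^sup>2 / 2)) * (\<integral>\<^sup>+x. ennreal (normal_density a 1 x) \<partial>lborel)"
    by (rule nn_integral_cmult) auto
  also have "(\<integral>\<^sup>+x. ennreal (normal_density a 1 x) \<partial>lborel) = 1"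
    by (subst nn_integral_eq_integral) auto
  finally show ?thesis
    by simp
qed

lemma product_prob_space_std_gauss: "product_prob_space (\<lambda>_. std_gauss)"
  by (simp add: product_prob_space_def product_prob_space_axioms_def product_sigma_finite_def
      prob_space_std_gauss prob_space_imp_sigma_finite)

lemma prob_space_PiM_std_gauss: "prob_space (PiM I (\<lambda>_. std_gauss))"
proof -
  interpret product_prob_space "\<lambda>_. std_gauss"
    by (rule product_prob_space_std_gauss)
  show ?thesis
    by (rule prob_space_PiM) (rule prob_space_std_gauss)
qed

lemma borel_measurable_linear_PiM_std_gauss:
  "(\<lambda>G. \<Sum>j\<in>I. G j * d j) \<in> borel_measurable (PiM I (\<lambda>_. std_gauss))"
proof -
  have "(\<lambda>G. G j) \<in> borel_measurable (PiM I (\<lambda>_. std_gauss))" if "j \<in> I" for j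
    using measurable_component_singleton[OF that, of "\<lambda>_. std_gauss"]
    by (simp add: measurable_cong_sets[OF refl sets_std_gauss])
  then show ?thesis
    by (intro borel_measurable_sum borel_measurable_times) auto
qed

lemma nn_integral_exp_linear_PiM_std_gauss:
  assumes I: "finite I"
  shows "(\<integral>\<^sup>+G. ennreal (exp (s * (\<Sum>j\<in>I. G j * d j))) \<partial>PiM I (\<lambda>_. std_gauss))
       = ennreal (exp (s\<^sup>2 * (\<Sum>j\<in>I. (d j)\<^sup>2) / 2))"
proof -
  interpret product_prob_space "\<lambda>_. std_gauss"
    by (rule product_prob_space_std_gauss)
  have "(\<integral>\<^sup>+G. ennreal (exp (s * (\<Sum>j\<in>I. G j * d j))) \<partial>PiM I (\<lambda>_. std_gauss))
      = (\<integral>\<^sup>+G. (\<Prod>j\<in>I. ennreal (exp ((s * d j) * G j))) \<partial>PiM I (\<lambda>_. std_gauss))"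
    by (intro nn_integral_cong)
      (simp add: sum_distrib_left exp_sum[OF I, symmetric] prod_ennreal algebra_simps)
  also have "\<dots> = (\<Prod>j\<in>I. \<integral>\<^sup>+x. ennreal (exp ((s * d j) * x)) \<partial>std_gauss)"
    using product_nn_integral_prod[OF I, of "\<lambda>j x. ennreal (exp ((s * d j) * x))"]
    by (simp add: measurable_cong_sets[OF refl sets_std_gauss])
  also have "\<dots> = ennreal (exp (\<Sum>j\<in>I. (s * d j)\<^sup>2 / 2))"
    by (simp add: std_gauss_mgf prod_ennreal exp_sum[OF I])
  finally show ?thesis
    by (simp add: power_mult_distrib sum_distrib_left sum_divide_distrib)
qed

lemma linear_PiM_std_gauss_upper_tail:
  assumes I: "finite I" and D: "D > 0" "(\<Sum>j\<in>I. (d j)\<^sup>2) \<le> D" and t: "t > 0"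
  shows "measure (PiM I (\<lambda>_. std_gauss)) {G \<in> space (PiM I (\<lambda>_. std_gauss)). (\<Sum>j\<in>I. G j * d j) \<ge> t}
       \<le> exp (- t\<^sup>2 / (2 * D))"
proof -
  let ?M = "PiM I (\<lambda>_. std_gauss)"
  let ?X = "\<lambda>G. \<Sum>j\<in>I. G j * d j"
  interpret prob_space ?M
    by (rule prob_space_PiM_std_gauss)
  define s where "s = t / D"
  have s: "s > 0"
    using D t by (simp add: s_def)
  have [measurable]: "?X \<in> borel_measurable ?M"
    by (rule borel_measurable_linear_PiM_std_gauss)
  have "emeasure ?M {G \<in> space ?M. ?X G \<ge> t}
      \<le> ennreal (exp (- s * t)) * (\<integral>\<^sup>+G. ennreal (exp (s * ?X G)) * indicator (space ?M) G \<partial>?M)"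
    using s by (intro Chernoff_ineq_nn_integral_ge) auto
  also have "(\<integral>\<^sup>+G. ennreal (exp (s * ?X G)) * indicator (space ?M) G \<partial>?M)
      = ennreal (exp (s\<^sup>2 * (\<Sum>j\<in>I. (d j)\<^sup>2) / 2))"
    by (simp add: nn_integral_exp_linear_PiM_std_gauss[OF I] cong: nn_integral_cong_simp)
  also have "ennreal (exp (- s * t)) * \<dots> = ennreal (exp (- s * t + s\<^sup>2 * (\<Sum>j\<in>I. (d j)\<^sup>2) / 2))"
    by (simp only: exp_add ennreal_mult exp_ge_zero)
  also have "\<dots> \<le> ennreal (exp (- t\<^sup>2 / (2 * D)))"
  proof (rule ennreal_leI, subst exp_le_cancel_iff)
    have "s\<^sup>2 * (\<Sum>j\<in>I. (d j)\<^sup>2) / 2 \<le> s\<^sup>2 * D / 2"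
      using D by (simp add: mult_left_mono)
    moreover have "- s * t + s\<^sup>2 * D / 2 = - t\<^sup>2 / (2 * D)"
      using D by (simp add: s_def power2_eq_square field_simps)
    ultimately show "- s * t + s\<^sup>2 * (\<Sum>j\<in>I. (d j)\<^sup>2) / 2 \<le> - t\<^sup>2 / (2 * D)"
      by linarith
  qed
  finally show ?thesis
    by (simp add: emeasure_eq_measure)
qed

lemma linear_PiM_std_gauss_abs_tail:
  assumes I: "finite I" and D: "D > 0" "(\<Sum>j\<in>I. (d j)\<^sup>2) \<le> D" and t: "t \<ge> 0"
  shows "measure (PiM I (\<lambda>_. std_gauss)) {G \<in> space (PiM I (\<lambda>_. std_gauss)). \<bar>\<Sum>j\<in>I. G j * d j\<bar> > t}
       \<le> 2 * exp (- t\<^sup>2 / (2 * D))"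
proof -
  let ?M = "PiM I (\<lambda>_. std_gauss)"
  let ?up = "\<lambda>d. {G \<in> space ?M. (\<Sum>j\<in>I. G j * d j) \<ge> t}"
  interpret prob_space ?M
    by (rule prob_space_PiM_std_gauss)
  show ?thesis
  proof (cases "t = 0")
    case True
    then show ?thesis
      using prob_le_1 by (simp add: order_trans[OF _ one_le_numeral])
  next
    case False
    with t have t: "t > 0"
      by simp
    have sets: "?up d' \<in> sets ?M" for d'
      using borel_measurable_linear_PiM_std_gauss[of d'] by measurable
    have "measure ?M {G \<in> space ?M. \<bar>\<Sum>j\<in>I. G j * d j\<bar> > t} \<le> measure ?M (?up d \<union> ?up (\<lambda>j. - d j))"
      by (rule finite_measure_mono) (auto simp: sum_negf sets)
    also have "\<dots> \<le> measure ?M (?up d) + measure ?M (?up (\<lambda>j. - d j))"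
      by (rule measure_Un_le[OF sets sets])
    also have "\<dots> \<le> 2 * exp (- t\<^sup>2 / (2 * D))"
      using linear_PiM_std_gauss_upper_tail[OF I D t]
        linear_PiM_std_gauss_upper_tail[OF I D(1) _ t, of "\<lambda>j. - d j"] D(2)
      by simp
    finally show ?thesis .
  qed
qed

lemma sets_PiM_std_gauss_uniform_linear_bound:
  assumes "finite W"
  shows "{G \<in> space (PiM I (\<lambda>_. std_gauss)). \<forall>w\<in>W. \<bar>\<Sum>j\<in>I. G j * d w j\<bar> \<le> t}
           \<in> sets (PiM I (\<lambda>_. std_gauss))"
proof -
  let ?M = "PiM I (\<lambda>_. std_gauss)"
  have "{G \<in> space ?M. \<forall>w\<in>W. \<bar>\<Sum>j\<in>I. G j * d w j\<bar> \<le> t}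
      = space ?M - (\<Union>w\<in>W. {G \<in> space ?M. \<bar>\<Sum>j\<in>I. G j * d w j\<bar> > t})"
    by auto
  also have "\<dots> \<in> sets ?M"
    using assms borel_measurable_linear_PiM_std_gauss
    by (intro sets.compl_sets sets.finite_UN) measurable
  finally show ?thesis .
qed

lemma prob_PiM_std_gauss_uniform_linear_bound:
  assumes I: "finite I" and W: "finite W" and D: "D > 0" "\<And>w. w \<in> W \<Longrightarrow> (\<Sum>j\<in>I. (d w j)\<^sup>2) \<le> D"
    and t: "t \<ge> 0"
  shows "measure (PiM I (\<lambda>_. std_gauss))
           {G \<in> space (PiM I (\<lambda>_. std_gauss)). \<forall>w\<in>W. \<bar>\<Sum>j\<in>I. G j * d w j\<bar> \<le> t}
         \<ge> 1 - real (card W) * (2 * exp (- t\<^sup>2 / (2 * D)))"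
proof -
  let ?M = "PiM I (\<lambda>_. std_gauss)"
  let ?bad = "\<lambda>w. {G \<in> space ?M. \<bar>\<Sum>j\<in>I. G j * d w j\<bar> > t}"
  interpret prob_space ?M
    by (rule prob_space_PiM_std_gauss)
  have bad: "?bad w \<in> sets ?M" for w
    using borel_measurable_linear_PiM_std_gauss[of "d w"] by measurable
  have "measure ?M (\<Union>w\<in>W. ?bad w) \<le> (\<Sum>w\<in>W. measure ?M (?bad w))"
    by (rule measure_UNION_le[OF W bad])
  also have "\<dots> \<le> (\<Sum>w\<in>W. 2 * exp (- t\<^sup>2 / (2 * D)))"
    using linear_PiM_std_gauss_abs_tail[OF I D(1) D(2) t] by (intro sum_mono) auto
  finally have "measure ?M (space ?M - (\<Union>w\<in>W. ?bad w))
      \<ge> 1 - real (card W) * (2 * exp (- t\<^sup>2 / (2 * D)))"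
    using bad W by (subst prob_compl) auto
  moreover have "space ?M - (\<Union>w\<in>W. ?bad w) = {G \<in> space ?M. \<forall>w\<in>W. \<bar>\<Sum>j\<in>I. G j * d w j\<bar> \<le> t}"
    by auto
  ultimately show ?thesis
    by simp
qed

section \<open>The injective norm of the symmetrized noise\<close>

definition sym_coef :: "nat \<Rightarrow> (nat \<Rightarrow> nat \<Rightarrow> real) \<Rightarrow> nat list \<Rightarrow> real" where
  "sym_coef p ws js =
     (1 / sqrt (fact p)) * (\<Sum>\<pi> | \<pi> permutes {..<p}. \<Prod>k<p. ws k (perm_idx (inv \<pi>) js ! k))"

lemma tensor_form_sym_noise:
  "tensor_form n p (sym_noise p Gt) ws = (\<Sum>js\<in>idx n p. Gt js * sym_coef p ws js)"
proof -
  let ?P = "{\<pi>. \<pi> permutes {..<p}}"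
  let ?c = "\<lambda>is. \<Prod>k<p. ws k (is ! k)"
  have shift: "(\<Sum>is\<in>idx n p. Gt (perm_idx \<pi> is) * ?c is)
      = (\<Sum>js\<in>idx n p. Gt js * ?c (perm_idx (inv \<pi>) js))" if "\<pi> \<in> ?P" for \<pi>
  proof -
    have \<pi>: "\<pi> permutes {..<p}"
      using that by simp
    have "(\<Sum>is\<in>idx n p. Gt (perm_idx \<pi> is) * ?c is)
        = (\<Sum>is\<in>idx n p. (\<lambda>js. Gt js * ?c (perm_idx (inv \<pi>) js)) (perm_idx \<pi> is))"
      by (intro sum.cong refl) (simp add: perm_idx_inv_perm_idx[OF \<pi>] idx_length)
    also have "\<dots> = (\<Sum>js\<in>idx n p. Gt js * ?c (perm_idx (inv \<pi>) js))"
      by (rule sum_idx_reindex_perm_idx[OF \<pi>])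
    finally show ?thesis .
  qed
  have "tensor_form n p (sym_noise p Gt) ws
      = 1 / sqrt (fact p) * (\<Sum>\<pi>\<in>?P. \<Sum>is\<in>idx n p. Gt (perm_idx \<pi> is) * ?c is)"
    unfolding tensor_form_def sym_noise_def
    by (subst sum.swap) (simp add: sum_distrib_left sum_distrib_right mult.assoc)
  also have "\<dots> = 1 / sqrt (fact p) * (\<Sum>\<pi>\<in>?P. \<Sum>js\<in>idx n p. Gt js * ?c (perm_idx (inv \<pi>) js))"
    by (simp add: shift)
  also have "\<dots> = (\<Sum>js\<in>idx n p. Gt js * sym_coef p ws js)"
    unfolding sym_coef_def by (subst sum.swap) (simp add: sum_distrib_left mult_ac)
  finally show ?thesis .
qed

lemma sum_sym_coef_sq_le:
  assumes ws: "\<forall>k<p. vnorm n (ws k) \<le> 1"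
  shows "(\<Sum>js\<in>idx n p. (sym_coef p ws js)\<^sup>2) \<le> fact p"
proof -
  let ?P = "{\<pi>. \<pi> permutes {..<p}}"
  let ?c = "\<lambda>is. \<Prod>k<p. ws k (is ! k)"
  have card_P: "card ?P = fact p"
    by (simp add: card_permutations)
  have "(sym_coef p ws js)\<^sup>2 \<le> (\<Sum>\<pi>\<in>?P. (?c (perm_idx (inv \<pi>) js))\<^sup>2)" for js
  proof -
    have "(sym_coef p ws js)\<^sup>2 = (\<Sum>\<pi>\<in>?P. ?c (perm_idx (inv \<pi>) js))\<^sup>2 / fact p"
      by (simp add: sym_coef_def power_mult_distrib power_divide)
    also have "\<dots> \<le> (\<Sum>\<pi>\<in>?P. (?c (perm_idx (inv \<pi>) js))\<^sup>2) * card ?P / fact p"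
      by (intro divide_right_mono sum_squared_le_sum_of_squares) simp
    finally show ?thesis
      by (simp add: card_P)
  qed
  then have "(\<Sum>js\<in>idx n p. (sym_coef p ws js)\<^sup>2)
      \<le> (\<Sum>\<pi>\<in>?P. \<Sum>js\<in>idx n p. (?c (perm_idx (inv \<pi>) js))\<^sup>2)"
    by (subst sum.swap) (rule sum_mono)
  also have "\<dots> = (\<Sum>\<pi>\<in>?P. \<Sum>js\<in>idx n p. (?c js)\<^sup>2)"
    by (intro sum.cong refl sum_idx_reindex_perm_idx permutes_inv) simp
  also have "\<dots> = fact p * (\<Prod>k<p. vnorm n (ws k) ^ 2)"
    using sum_idx_prod_nth[where f = "\<lambda>k i. (ws k i)\<^sup>2"]
    by (simp add: card_P prod_power_distrib sum_sq_eq_vnorm_sq)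
  also have "\<dots> \<le> fact p"
    using ws by (intro mult_left_le prod_le_1) (auto simp: power_le_one)
  finally show ?thesis .
qed

text \<open>The constant is chosen so that the union bound over the \<open>exp (2 p (p + 1) n)\<close> net tuples
  still leaves probability \<open>2 exp (- n)\<close>.\<close>

definition noise_const :: "nat \<Rightarrow> real" where
  "noise_const p = sqrt (2 * fact p * (2 * p * (p + 1) + 1))"

definition net_tuples :: "nat \<Rightarrow> nat \<Rightarrow> (nat \<Rightarrow> nat \<Rightarrow> real) set" where
  "net_tuples n p = {..<p} \<rightarrow>\<^sub>E unit_net n (2 * p)"

definition small_noise :: "nat \<Rightarrow> nat \<Rightarrow> (nat list \<Rightarrow> real) set" where
  "small_noise n p = {Gt \<in> space (gauss_tensor n p).
     \<forall>ws\<in>net_tuples n p. \<bar>\<Sum>js\<in>idx n p. Gt js * sym_coef p ws js\<bar> \<le> noise_const p * sqrt n}"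

lemma noise_const_pos: "noise_const p > 0"
  unfolding noise_const_def by (intro real_sqrt_gt_zero mult_pos_pos) (simp_all add: add_pos_nonneg)

lemma card_net_tuples: "real (card (net_tuples n p)) \<le> exp (2 * p * (p + 1) * n)"
proof -
  have "real (card (net_tuples n p)) = real (card (unit_net n (2 * p))) ^ p"
    by (simp add: net_tuples_def card_PiE)
  also have "\<dots> \<le> exp (real ((2 * p + 2) * n)) ^ p"
    by (intro power_mono card_unit_net) simp
  also have "\<dots> = exp (real p * real ((2 * p + 2) * n))"
    by (rule exp_of_nat_mult[symmetric])
  also have "\<dots> = exp (2 * real p * (real p + 1) * real n)"
    by (simp add: algebra_simps)
  finally show ?thesis .
qed

lemma finite_net_tuples: "finite (net_tuples n p)"
  unfolding net_tuples_def by (intro finite_PiE) (simp_all add: finite_unit_net)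

lemma small_noise_eq:
  "small_noise n p = {G \<in> space (PiM (idx n p) (\<lambda>_. std_gauss)).
     \<forall>ws\<in>net_tuples n p. \<bar>\<Sum>js\<in>idx n p. G js * sym_coef p ws js\<bar> \<le> noise_const p * sqrt n}"
  by (simp only: small_noise_def gauss_tensor_def)

lemma sets_small_noise: "small_noise n p \<in> sets (gauss_tensor n p)"
  unfolding small_noise_eq gauss_tensor_def
  by (rule sets_PiM_std_gauss_uniform_linear_bound[OF finite_net_tuples])

lemma measure_small_noise: "measure (gauss_tensor n p) (small_noise n p) \<ge> 1 - 2 * exp (- real n)"
proof -
  let ?t = "noise_const p * sqrt n"
  have var: "(\<Sum>js\<in>idx n p. (sym_coef p ws js)\<^sup>2) \<le> fact p" if "ws \<in> net_tuples n p" for ws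
    using that unfolding net_tuples_def
    by (intro sum_sym_coef_sq_le) (meson PiE_mem lessThan_iff vnorm_le_1_if_unit_net)
  have t: "?t \<ge> 0"
    using noise_const_pos[of p] by simp
  define a where "a = 2 * real p * (real p + 1) * real n"
  have "?t\<^sup>2 = 2 * fact p * (a + n)"
    unfolding noise_const_def a_def by (simp add: power_mult_distrib algebra_simps)
  then have exponent: "- ?t\<^sup>2 / (2 * fact p) = - (a + n)"
    by simp
  have "real (card (net_tuples n p)) * (2 * exp (- ?t\<^sup>2 / (2 * fact p)))
      \<le> exp a * (2 * exp (- (a + n)))"
    unfolding exponent a_def by (intro mult_right_mono card_net_tuples) simp
  also have "\<dots> = 2 * exp (- real n)"
    by (simp add: mult.left_commute flip: exp_add)
  finally show ?thesis
    using prob_PiM_std_gauss_uniform_linear_bound[where d = "sym_coef p",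
        OF finite_idx finite_net_tuples[of n p] fact_gt_zero var t]
    unfolding small_noise_eq gauss_tensor_def by linarith
qed

lemma tensor_form_sym_noise_le:
  assumes n: "n \<ge> 1" and p: "p \<ge> 1" and Gt: "Gt \<in> small_noise n p"
    and ws: "\<forall>k<p. vnorm n (ws k) \<le> 1"
  shows "\<bar>tensor_form n p (sym_noise p Gt) ws\<bar> \<le> 2 * (noise_const p * sqrt n)"
proof (rule tensor_form_net_bound[where \<epsilon> = "1 / (2 * p)" and N = "unit_net n (2 * p)"])
  show "real p * (1 / (2 * p)) \<le> 1 / 2"
    using p by simp
  show "\<exists>w\<in>unit_net n (2 * p). vnorm n (\<lambda>i. v i - w i) \<le> 1 / (2 * p)" if "vnorm n v \<le> 1" for v
    using unit_net_approx[OF n _ that, of "2 * p"] p by simp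
  show "\<bar>tensor_form n p (sym_noise p Gt) vs\<bar> \<le> noise_const p * sqrt n"
    if "\<forall>k<p. vs k \<in> unit_net n (2 * p)" for vs
  proof -
    have "restrict vs {..<p} \<in> net_tuples n p"
      using that by (simp add: net_tuples_def)
    moreover have "tensor_form n p (sym_noise p Gt) vs
        = tensor_form n p (sym_noise p Gt) (restrict vs {..<p})"
      by (rule tensor_form_cong) simp
    ultimately show ?thesis
      using Gt by (simp add: small_noise_def tensor_form_sym_noise)
  qed
qed (use ws vnorm_le_1_if_unit_net in auto)

lemma vnorm_tensor_apply_sym_noise_le:
  assumes p: "p \<ge> 1" and Gt: "Gt \<in> small_noise n p"
  shows "vnorm n (tensor_apply n p (sym_noise p Gt) u)
           \<le> 2 * noise_const p * sqrt n * vnorm n u ^ (p - 1)"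
proof (cases "n = 0")
  case False
  then have "n \<ge> 1"
    by simp
  then have "vnorm n (tensor_apply n p (sym_noise p Gt) u)
      \<le> 2 * (noise_const p * sqrt n) * vnorm n u ^ (p - 1)"
    using tensor_form_sym_noise_le[OF _ p Gt] by (intro vnorm_tensor_apply_le[OF p])
  then show ?thesis
    by (simp add: mult.assoc)
qed (simp add: vnorm_def vinner_def)

definition on_sphere :: "nat \<Rightarrow> (nat \<Rightarrow> real) measure \<Rightarrow> (nat \<Rightarrow> real) set" where
  "on_sphere n \<mu> = {x \<in> space \<mu>. vnorm n x = sqrt n}"

definition good_event ::
    "nat \<Rightarrow> nat \<Rightarrow> (nat \<Rightarrow> real) measure \<Rightarrow> ((nat \<Rightarrow> real) \<times> (nat list \<Rightarrow> real)) set" where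
  "good_event n p \<mu> = on_sphere n \<mu> \<times> small_noise n p"

lemma borel_measurable_vnorm:
  assumes "sets M = sets (vec_space n)"
  shows "vnorm n \<in> borel_measurable M"
proof -
  have "(\<lambda>x. x i) \<in> borel_measurable (vec_space n)" if "i \<in> {..<n}" for i
    using measurable_component_singleton[OF that, of "\<lambda>_. lborel"]
    by (simp add: vec_space_def measurable_cong_sets[OF refl sets_lborel])
  then have "vnorm n \<in> borel_measurable (vec_space n)"
    unfolding vnorm_def[abs_def] vinner_def by measurable
  then show ?thesis
    by (simp add: measurable_cong_sets[OF assms refl])
qed

lemma on_sphere_prob:
  assumes "sphere_prior n \<mu>"
  shows "on_sphere n \<mu> \<in> sets \<mu>" and "measure \<mu> (on_sphere n \<mu>) = 1"
proof -
  interpret prob_space \<mu>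
    using assms by (simp add: sphere_prior_def)
  have [measurable]: "vnorm n \<in> borel_measurable \<mu>"
    using assms by (simp add: sphere_prior_def borel_measurable_vnorm)
  show S: "on_sphere n \<mu> \<in> sets \<mu>"
    unfolding on_sphere_def by measurable
  have "AE x in \<mu>. vnorm n x = sqrt n"
    using assms by (simp add: sphere_prior_def)
  then show "measure \<mu> (on_sphere n \<mu>) = 1"
    using S by (simp add: on_sphere_def prob_Collect_eq_1)
qed

lemma prob_space_model: "sphere_prior n \<mu> \<Longrightarrow> prob_space (model n p \<mu>)"
  unfolding model_def gauss_tensor_def sphere_prior_def
  by (auto intro: prob_space_pair prob_space_PiM_std_gauss)

lemma sets_good_event: "sphere_prior n \<mu> \<Longrightarrow> good_event n p \<mu> \<in> sets (model n p \<mu>)"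
  unfolding good_event_def model_def
  using on_sphere_prob(1) sets_small_noise by (intro pair_measureI)

lemma good_event_subset_space: "sphere_prior n \<mu> \<Longrightarrow> good_event n p \<mu> \<subseteq> space (model n p \<mu>)"
  using sets.sets_into_space[OF sets_good_event] by blast

lemma measure_good_event:
  assumes prior: "sphere_prior n \<mu>"
  shows "measure (model n p \<mu>) (good_event n p \<mu>) \<ge> 1 - 2 * exp (- real n)"
proof -
  interpret G: prob_space "gauss_tensor n p"
    unfolding gauss_tensor_def by (rule prob_space_PiM_std_gauss)
  interpret M: prob_space "model n p \<mu>"
    using prior by (rule prob_space_model)
  interpret P: prob_space \<mu>
    using prior by (simp add: sphere_prior_def)
  have "emeasure (model n p \<mu>) (good_event n p \<mu>)
      = emeasure \<mu> (on_sphere n \<mu>) * emeasure (gauss_tensor n p) (small_noise n p)"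
    unfolding good_event_def model_def
    by (rule G.emeasure_pair_measure_Times[OF on_sphere_prob(1)[OF prior] sets_small_noise])
  then have "measure (model n p \<mu>) (good_event n p \<mu>) = measure (gauss_tensor n p) (small_noise n p)"
    using on_sphere_prob(2)[OF prior]
    by (simp add: M.emeasure_eq_measure P.emeasure_eq_measure G.emeasure_eq_measure)
  then show ?thesis
    using measure_small_noise by simp
qed

lemma good_event_tendsto_1:
  assumes prior: "\<And>n. sphere_prior n (\<mu> n)"
  shows "(\<lambda>n. measure (model n p (\<mu> n)) (good_event n p (\<mu> n))) \<longlonglongrightarrow> 1"
proof (rule real_tendsto_sandwich)
  have "exp (- 1 :: real) < 1"
    by (subst exp_less_one_iff) simp
  then have "(\<lambda>n. exp (- 1 :: real) ^ n) \<longlonglongrightarrow> 0"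
    by (intro LIMSEQ_power_zero) (simp only: real_norm_def abs_of_pos exp_gt_zero)
  then have "(\<lambda>n. 1 - 2 * exp (- 1 :: real) ^ n) \<longlonglongrightarrow> 1 - 2 * 0"
    by (rule tendsto_diff[OF tendsto_const tendsto_mult_left])
  then show "(\<lambda>n. 1 - 2 * exp (- real n)) \<longlonglongrightarrow> 1"
    by (simp flip: exp_of_nat_mult)
  show "\<forall>\<^sub>F n in sequentially. 1 - 2 * exp (- real n) \<le> measure (model n p (\<mu> n)) (good_event n p (\<mu> n))"
    using measure_good_event[OF prior] by simp
  show "\<forall>\<^sub>F n in sequentially. measure (model n p (\<mu> n)) (good_event n p (\<mu> n)) \<le> 1"
    using prob_space.prob_le_1[OF prob_space_model[OF prior]] by simp
qed simp

section \<open>One step of the power iteration\<close>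

lemma tensor_apply_spiked_tensor:
  assumes "p \<ge> 1"
  shows "tensor_apply n p (spiked_tensor p lam x Gt) u i
       = lam * vinner n x u ^ (p - 1) * x i + tensor_apply n p (sym_noise p Gt) u i"
proof -
  have "tensor_apply n p (spiked_tensor p lam x Gt) u i
      = lam * x i * (\<Sum>js\<in>idx n (p - 1). prod_list (map x js) * prod_list (map u js))
        + tensor_apply n p (sym_noise p Gt) u i"
    unfolding tensor_apply_def spiked_tensor_def
    by (simp add: algebra_simps sum.distrib sum_distrib_left)
  then show ?thesis
    by (simp add: sum_idx_prod_list)
qed

lemma signal_plus_noise_bounds:
  assumes y: "\<And>i. i < n \<Longrightarrow> y i = a * x i + g i"
  shows "(\<bar>a\<bar> * vnorm n x - vnorm n g) * vnorm n x \<le> \<bar>vinner n y x\<bar>"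
    and "vnorm n y \<le> \<bar>a\<bar> * vnorm n x + vnorm n g"
proof -
  have "vinner n y x = (\<Sum>i<n. a * (x i * x i) + g i * x i)"
    unfolding vinner_def using y by (intro sum.cong) (auto simp: algebra_simps)
  also have "\<dots> = a * vnorm n x ^ 2 + vinner n g x"
    by (simp add: vnorm_sq vinner_def sum.distrib sum_distrib_left)
  finally have "vinner n y x = a * vnorm n x ^ 2 + vinner n g x" .
  moreover have "\<bar>a * vnorm n x ^ 2\<bar> = \<bar>a\<bar> * vnorm n x * vnorm n x"
    by (simp add: abs_mult power2_eq_square)
  ultimately show "(\<bar>a\<bar> * vnorm n x - vnorm n g) * vnorm n x \<le> \<bar>vinner n y x\<bar>"
    using abs_vinner_le[of n g x] by (simp add: left_diff_distrib)
  have "vnorm n y = vnorm n (\<lambda>i. a * x i + g i)"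
    using y by (intro vnorm_cong) auto
  also have "\<dots> \<le> \<bar>a\<bar> * vnorm n x + vnorm n g"
    using vnorm_add_le[of n "\<lambda>i. a * x i" g] by (simp add: vnorm_scale)
  finally show "vnorm n y \<le> \<bar>a\<bar> * vnorm n x + vnorm n g" .
qed

lemma one_minus_le_diff_div_add:
  fixes S G :: real
  assumes "S > 0" "G \<ge> 0"
  shows "1 - 2 * G / S \<le> (S - G) / (S + G)"
proof -
  have "(1 - 2 * G / S) * (S + G) = S - G - 2 * G\<^sup>2 / S"
    using assms by (simp add: field_simps power2_eq_square)
  also have "\<dots> \<le> S - G"
    using assms by simp
  finally show ?thesis
    using assms by (simp add: pos_le_divide_eq)
qed

lemma corr_signal_plus_noise_ge:
  assumes x: "vnorm n x > 0" and a: "a \<noteq> 0" and g: "vnorm n g \<le> G"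
    and y: "\<And>i. i < n \<Longrightarrow> y i = a * x i + g i"
  shows "corr n y x \<ge> 1 - 2 * G / (\<bar>a\<bar> * vnorm n x)"
proof -
  define X where "X = vnorm n x"
  define S where "S = \<bar>a\<bar> * X"
  have X: "X > 0" and S: "S > 0"
    using a x by (simp_all add: S_def X_def)
  have G: "G \<ge> 0"
    using g vnorm_nonneg[of n g] by linarith
  have "(S - vnorm n g) * X \<le> \<bar>vinner n y x\<bar>"
    unfolding S_def X_def using y by (rule signal_plus_noise_bounds(1))
  then have inner: "(S - G) * X \<le> \<bar>vinner n y x\<bar>"
    using mult_right_mono[OF g less_imp_le[OF X]] by (simp add: left_diff_distrib)
  have "vnorm n y \<le> S + vnorm n g"
    unfolding S_def X_def using y by (rule signal_plus_noise_bounds(2))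
  then have norm_y: "vnorm n y \<le> S + G"
    using g by simp
  show ?thesis
  proof (cases "S \<le> G")
    case True
    then have "1 - 2 * G / S \<le> 0"
      using S by (simp add: field_simps)
    then show ?thesis
      by (simp add: S_def X_def corr_def order_trans[OF _ divide_nonneg_nonneg])
  next
    case False
    then have "0 < (S - G) * X"
      using X by simp
    then have "vnorm n y > 0"
      using inner abs_vinner_le[of n y x] by (metis less_le_trans mult_zero_left vnorm_nonneg less_le)
    then have "(S - G) * X / ((S + G) * X) \<le> corr n y x"
      using inner norm_y False X unfolding corr_def X_def[symmetric]
      by (intro frac_le mult_right_mono) auto
    then show ?thesis
      using one_minus_le_diff_div_add[OF S G] X by (simp add: S_def X_def)
  qed
qed

lemma inverse_pow_conv_powr:
  assumes "t > 0" "p \<ge> 1"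
  shows "inverse (t ^ (p - 1)) = t powr (1 - real p)"
proof -
  have "t powr (1 - real p) = t powr (- real (p - 1))"
    using assms by (simp add: of_nat_diff)
  also have "\<dots> = inverse (t powr real (p - 1))"
    by (rule powr_minus)
  also have "\<dots> = inverse (t ^ (p - 1))"
    by (simp only: powr_realpow[OF assms(1)])
  finally show ?thesis ..
qed

lemma corr_ge_imp_abs_vinner_ge:
  assumes u: "corr n u x \<ge> \<tau>" and \<tau>: "\<tau> > 0"
  shows "vnorm n u > 0" and "vnorm n x > 0" and "\<tau> * vnorm n u * vnorm n x \<le> \<bar>vinner n u x\<bar>"
proof -
  have "vnorm n u * vnorm n x \<noteq> 0"
    using u \<tau> by (auto simp: corr_def)
  then show U: "vnorm n u > 0" and X: "vnorm n x > 0"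
    by (simp_all add: less_le)
  show "\<tau> * vnorm n u * vnorm n x \<le> \<bar>vinner n u x\<bar>"
    using u U X by (simp add: corr_def pos_le_divide_eq mult.assoc)
qed

lemma corr_tensor_power_step:
  assumes p: "p \<ge> 1" and x: "vnorm n x = sqrt n" and K: "K \<ge> 0"
    and noise: "vnorm n (tensor_apply n p (sym_noise p Gt) u) \<le> K * sqrt n * vnorm n u ^ (p - 1)"
    and lam: "lam > 0" and \<tau>: "\<tau> > 0" and u: "corr n u x \<ge> \<tau>"
  shows "corr n (tensor_apply n p (spiked_tensor p lam x Gt) u) x
           \<ge> 1 - 2 * K * inverse lam * \<tau> powr (1 - real p) * real n powr ((1 - real p) / 2)"
proof -
  define a where "a = lam * vinner n x u ^ (p - 1)"
  define N where "N = K * sqrt n * vnorm n u ^ (p - 1)"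
  define L where "L = lam * (\<tau> * vnorm n u * sqrt n) ^ (p - 1)"
  have U: "vnorm n u > 0" and n: "n > 0"
    using corr_ge_imp_abs_vinner_ge[OF u \<tau>] x by simp_all
  have "\<tau> * vnorm n u * sqrt n \<le> \<bar>vinner n x u\<bar>"
    using corr_ge_imp_abs_vinner_ge(3)[OF u \<tau>] x by (simp add: vinner_commute)
  then have "(\<tau> * vnorm n u * sqrt n) ^ (p - 1) \<le> \<bar>vinner n x u\<bar> ^ (p - 1)"
    using \<tau> U by (intro power_mono) auto
  then have a_ge: "L \<le> \<bar>a\<bar>"
    using lam by (simp add: L_def a_def abs_mult power_abs)
  have L: "L > 0"
    using lam \<tau> U n by (simp add: L_def)
  then have "a \<noteq> 0"
    using a_ge by auto
  have "corr n (tensor_apply n p (spiked_tensor p lam x Gt) u) x \<ge> 1 - 2 * N / (\<bar>a\<bar> * vnorm n x)"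
    using noise \<open>a \<noteq> 0\<close> n x unfolding N_def
    by (intro corr_signal_plus_noise_ge) (simp_all add: tensor_apply_spiked_tensor[OF p] a_def)
  moreover have "2 * N / (\<bar>a\<bar> * vnorm n x) \<le> 2 * N / (L * sqrt n)"
    using a_ge L K U n x unfolding N_def by (intro divide_left_mono mult_right_mono mult_pos_pos) auto
  moreover have "2 * N / (L * sqrt n)
      = 2 * K * inverse lam * inverse (\<tau> ^ (p - 1)) * inverse (sqrt n ^ (p - 1))"
    using lam \<tau> U n by (simp add: N_def L_def power_mult_distrib field_simps)
  moreover have "inverse (sqrt n ^ (p - 1)) = real n powr ((1 - real p) / 2)"
    using inverse_pow_conv_powr[of "sqrt n" p] n p by (simp add: powr_half_sqrt[symmetric] powr_powr)
  ultimately show ?thesis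
    using inverse_pow_conv_powr[OF \<tau> p] by simp
qed

lemma good_event_corr:
  assumes p: "p \<ge> 1" and xG: "(x, Gt) \<in> good_event n p \<mu>"
    and lam: "lam > 0" and \<tau>: "\<tau> > 0" and u: "corr n u x \<ge> \<tau>"
  shows "corr n (tensor_apply n p (spiked_tensor p lam x Gt) u) x
           \<ge> 1 - 4 * noise_const p * inverse lam * \<tau> powr (1 - real p) * real n powr ((1 - real p) / 2)"
  using corr_tensor_power_step[OF p _ _ vnorm_tensor_apply_sym_noise_le[OF p] lam \<tau> u]
    xG noise_const_pos[of p] by (simp add: good_event_def on_sphere_def)

lemma whp_if_eventually_subset:
  assumes sets: "\<And>n. E n \<in> sets (M n)" and lim: "(\<lambda>n. measure (M n) (E n)) \<longlonglongrightarrow> 1"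
    and sub: "eventually (\<lambda>n. E n \<subseteq> A n) sequentially"
  shows "whp M A"
  unfolding whp_def
proof (intro exI conjI allI)
  let ?E = "\<lambda>n. if E n \<subseteq> A n then E n else {}"
  show "?E n \<in> sets (M n)" "?E n \<subseteq> A n" for n
    using sets by auto
  have "eventually (\<lambda>n. measure (M n) (E n) = measure (M n) (?E n)) sequentially"
    using sub by eventually_elim simp
  then show "(\<lambda>n. measure (M n) (?E n)) \<longlonglongrightarrow> 1"
    using lim by (rule Lim_transform_eventually[rotated])
qed

lemma smallo_imp_eventually_inverse_mult_le:
  fixes f g :: "nat \<Rightarrow> real"
  assumes "f \<in> o(g)" and g: "\<And>n. g n \<ge> 0" and f: "eventually (\<lambda>n. f n > 0) sequentially"
    and "\<epsilon> > 0"
  shows "eventually (\<lambda>n. g n > 0 \<and> inverse (g n) * f n \<le> \<epsilon>) sequentially"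
proof -
  have "eventually (\<lambda>n. norm (f n) \<le> \<epsilon> * norm (g n)) sequentially"
    using \<open>f \<in> o(g)\<close> \<open>\<epsilon> > 0\<close> by (rule landau_o.smallD)
  with f show ?thesis
  proof eventually_elim
    case (elim n)
    then have "f n \<le> \<epsilon> * g n"
      using g[of n] by simp
    moreover from this have "g n > 0"
      using elim \<open>\<epsilon> > 0\<close> by (meson less_le_trans zero_less_mult_pos)
    ultimately show ?case
      by (simp add: field_simps)
  qed
qed

lemma whp_power_step_corr_bound:
  assumes p: "p \<ge> 1" and prior: "\<And>n. sphere_prior n (prior n)"
  shows "whp (\<lambda>n. model n p (prior n))
           (\<lambda>n. {(x, Gt) \<in> space (model n p (prior n)).
              \<forall>u \<tau>. \<tau> > 0 \<and> lam n > 0 \<and> corr n u x \<ge> \<tau> \<longrightarrow>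
                corr n (tensor_apply n p (spiked_tensor p (lam n) x Gt) u) x
                  \<ge> 1 - 4 * noise_const p * inverse (lam n) * \<tau> powr (1 - real p)
                        * real n powr ((1 - real p) / 2)})"
  by (rule whp_if_eventually_subset[OF sets_good_event[OF prior] good_event_tendsto_1[OF prior]
        always_eventually])
    (use good_event_subset_space[OF prior] good_event_corr[OF p] in fast)

lemma whp_power_step_corr_tendsto_1:
  assumes p: "p \<ge> 1" and lam: "\<And>n. lam n \<ge> 0" and prior: "\<And>n. sphere_prior n (prior n)"
    and \<tau>: "\<tau> > 0" and small: "(\<lambda>n. real n powr ((1 - real p) / 2)) \<in> o(lam)" and \<epsilon>: "\<epsilon> > 0"
  shows "whp (\<lambda>n. model n p (prior n))
           (\<lambda>n. {(x, Gt) \<in> space (model n p (prior n)).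
              \<forall>u. corr n u x \<ge> \<tau> \<longrightarrow>
                corr n (tensor_apply n p (spiked_tensor p (lam n) x Gt) u) x \<ge> 1 - \<epsilon>})"
proof -
  define C where "C = 4 * noise_const p * \<tau> powr (1 - real p)"
  have C: "C > 0"
    using noise_const_pos[of p] \<tau> by (simp add: C_def)
  have "eventually (\<lambda>n. real n powr ((1 - real p) / 2) > 0) sequentially"
    using eventually_gt_at_top[of 0] by eventually_elim simp
  then have "eventually (\<lambda>n. lam n > 0 \<and> inverse (lam n) * real n powr ((1 - real p) / 2) \<le> \<epsilon> / C)
      sequentially"
    using C \<epsilon> by (intro smallo_imp_eventually_inverse_mult_le[OF small lam]) auto
  then have "eventually (\<lambda>n. lam n > 0 \<and>
      4 * noise_const p * inverse (lam n) * \<tau> powr (1 - real p) * real n powr ((1 - real p) / 2) \<le> \<epsilon>)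
      sequentially"
    by eventually_elim (use C in \<open>simp add: C_def field_simps\<close>)
  then show ?thesis
    by (rule whp_if_eventually_subset[OF sets_good_event[OF prior] good_event_tendsto_1[OF prior]
          eventually_mono])
      (use good_event_subset_space[OF prior] good_event_corr[OF p _ _ \<tau>] in fastforce)
qed

theorem proposition1:
  fixes p :: nat
  assumes "p \<ge> 2"
  shows "(\<exists>c>0. \<forall>(lam :: nat \<Rightarrow> real) (prior :: nat \<Rightarrow> (nat \<Rightarrow> real) measure).
            (\<forall>n. lam n \<ge> 0) \<and> (\<forall>n. sphere_prior n (prior n)) \<longrightarrow>
            whp (\<lambda>n. model n p (prior n))
              (\<lambda>n. {(x, Gt) \<in> space (model n p (prior n)).
                 \<forall>u \<tau>. \<tau> > 0 \<and> lam n > 0 \<and> corr n u x \<ge> \<tau> \<longrightarrow>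
                   corr n (tensor_apply n p (spiked_tensor p (lam n) x Gt) u) x
                     \<ge> 1 - c * inverse (lam n) * \<tau> powr (1 - real p) * real n powr ((1 - real p) / 2)}))
       \<and> (\<forall>(lam :: nat \<Rightarrow> real) (prior :: nat \<Rightarrow> (nat \<Rightarrow> real) measure) (\<tau> :: real).
            (\<forall>n. lam n \<ge> 0) \<and> (\<forall>n. sphere_prior n (prior n)) \<and> \<tau> > 0
            \<and> (\<lambda>n. real n powr ((1 - real p) / 2)) \<in> o(lam) \<longrightarrow>
            (\<forall>\<epsilon>>0. whp (\<lambda>n. model n p (prior n))
              (\<lambda>n. {(x, Gt) \<in> space (model n p (prior n)).
                 \<forall>u. corr n u x \<ge> \<tau> \<longrightarrow>
                   corr n (tensor_apply n p (spiked_tensor p (lam n) x Gt) u) x \<ge> 1 - \<epsilon>})))"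
proof -
  have "p \<ge> 1"
    using assms by simp
  then show ?thesis
    using whp_power_step_corr_bound whp_power_step_corr_tendsto_1 noise_const_pos[of p]
    by (intro conjI exI[of _ "4 * noise_const p"] allI impI) auto
qed

end
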